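(* Let $Q$ be a power associative loop such that the factor loop $Q/Z(Q)$ is a cyclic group. Then $Q$ is an abelian group. *)

theory Defs
  imports "HOL-Algebra.Generated_Groups"
begin

definition loop :: "'a monoid \<Rightarrow> bool" where
  "loop Q \<longleftrightarrow>
     \<one>\<^bsub>Q\<^esub> \<in> carrier Q \<and>
     (\<forall>a\<in>carrier Q. \<forall>b\<in>carrier Q. a \<otimes>\<^bsub>Q\<^esub> b \<in> carrier Q) \<and>
     (\<forall>a\<in>carrier Q. \<one>\<^bsub>Q\<^esub> \<otimes>\<^bsub>Q\<^esub> a = a \<and> a \<otimes>\<^bsub>Q\<^esub> \<one>\<^bsub>Q\<^esub> = a) \<and>
     (\<forall>a\<in>carrier Q. \<forall>b\<in>carrier Q. \<exists>!x. x \<in> carrier Q \<and> a \<otimes>\<^bsub>Q\<^esub> x = b) \<and>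
     (\<forall>a\<in>carrier Q. \<forall>b\<in>carrier Q. \<exists>!y. y \<in> carrier Q \<and> y \<otimes>\<^bsub>Q\<^esub> a = b)"

definition ldiv :: "'a monoid \<Rightarrow> 'a \<Rightarrow> 'a \<Rightarrow> 'a" where
  "ldiv Q a b = (THE x. x \<in> carrier Q \<and> a \<otimes>\<^bsub>Q\<^esub> x = b)"

definition rdiv :: "'a monoid \<Rightarrow> 'a \<Rightarrow> 'a \<Rightarrow> 'a" where
  "rdiv Q b a = (THE y. y \<in> carrier Q \<and> y \<otimes>\<^bsub>Q\<^esub> a = b)"

inductive_set subloop_gen :: "'a monoid \<Rightarrow> 'a set \<Rightarrow> 'a set" for Q S where
  one: "\<one>\<^bsub>Q\<^esub> \<in> subloop_gen Q S"
| incl: "s \<in> S \<Longrightarrow> s \<in> subloop_gen Q S"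
| mult: "a \<in> subloop_gen Q S \<Longrightarrow> b \<in> subloop_gen Q S \<Longrightarrow> a \<otimes>\<^bsub>Q\<^esub> b \<in> subloop_gen Q S"
| ldiv: "a \<in> subloop_gen Q S \<Longrightarrow> b \<in> subloop_gen Q S \<Longrightarrow> ldiv Q a b \<in> subloop_gen Q S"
| rdiv: "a \<in> subloop_gen Q S \<Longrightarrow> b \<in> subloop_gen Q S \<Longrightarrow> rdiv Q b a \<in> subloop_gen Q S"

definition power_associative :: "'a monoid \<Rightarrow> bool" where
  "power_associative Q \<longleftrightarrow>
     (\<forall>x\<in>carrier Q. \<forall>a\<in>subloop_gen Q {x}. \<forall>b\<in>subloop_gen Q {x}. \<forall>c\<in>subloop_gen Q {x}.
        (a \<otimes>\<^bsub>Q\<^esub> b) \<otimes>\<^bsub>Q\<^esub> c = a \<otimes>\<^bsub>Q\<^esub> (b \<otimes>\<^bsub>Q\<^esub> c))"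

definition loop_center :: "'a monoid \<Rightarrow> 'a set" where
  "loop_center Q = {a \<in> carrier Q. \<forall>x\<in>carrier Q. \<forall>y\<in>carrier Q.
      a \<otimes>\<^bsub>Q\<^esub> x = x \<otimes>\<^bsub>Q\<^esub> a \<and>
      (a \<otimes>\<^bsub>Q\<^esub> x) \<otimes>\<^bsub>Q\<^esub> y = a \<otimes>\<^bsub>Q\<^esub> (x \<otimes>\<^bsub>Q\<^esub> y) \<and>
      (x \<otimes>\<^bsub>Q\<^esub> a) \<otimes>\<^bsub>Q\<^esub> y = x \<otimes>\<^bsub>Q\<^esub> (a \<otimes>\<^bsub>Q\<^esub> y) \<and>
      (x \<otimes>\<^bsub>Q\<^esub> y) \<otimes>\<^bsub>Q\<^esub> a = x \<otimes>\<^bsub>Q\<^esub> (y \<otimes>\<^bsub>Q\<^esub> a)}"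

definition lcoset :: "'a monoid \<Rightarrow> 'a \<Rightarrow> 'a set \<Rightarrow> 'a set" where
  "lcoset Q a N = {a \<otimes>\<^bsub>Q\<^esub> n | n. n \<in> N}"

definition factor_loop :: "'a monoid \<Rightarrow> 'a set \<Rightarrow> 'a set monoid" where
  "factor_loop Q N =
     \<lparr> carrier = {lcoset Q a N | a. a \<in> carrier Q},
       mult = (\<lambda>A B. lcoset Q ((SOME a. a \<in> A \<inter> carrier Q) \<otimes>\<^bsub>Q\<^esub> (SOME b. b \<in> B \<inter> carrier Q)) N),
       one = lcoset Q \<one>\<^bsub>Q\<^esub> N \<rparr>"

definition cyclic_group :: "('a, 'b) monoid_scheme \<Rightarrow> bool" where
  "cyclic_group G \<longleftrightarrow> group G \<and> (\<exists>g\<in>carrier G. carrier G = generate G {g})"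

end

theory Submission
  imports Defs
begin

text \<open>Pick g whose coset generates the cyclic group Q/Z(Q). Every element of Q is then h z with
  h in the subloop \<langle>g\<rangle> and z central. By power associativity \<langle>g\<rangle> is associative, and
  all its elements commute with g, hence, by the same argument once more, with each other. Central
  factors can be moved freely through products, so associativity and commutativity of Q reduce
  to those of \<langle>g\<rangle> and of Z(Q).\<close>

lemma factor_loop_carrier: "carrier (factor_loop Q N) = {lcoset Q a N | a. a \<in> carrier Q}"
  by (simp add: factor_loop_def)

lemma factor_loop_one: "\<one>\<^bsub>factor_loop Q N\<^esub> = lcoset Q \<one>\<^bsub>Q\<^esub> N"
  by (simp add: factor_loop_def)

locale loop_struct =
  fixes Q :: "'a monoid" (structure)
  assumes is_loop: "loop Q"
begin

lemma one_closed [simp, intro]: "\<one> \<in> carrier Q"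
  using is_loop by (simp add: loop_def)

lemma m_closed [simp, intro]: "\<lbrakk>a \<in> carrier Q; b \<in> carrier Q\<rbrakk> \<Longrightarrow> a \<otimes> b \<in> carrier Q"
  using is_loop by (simp add: loop_def)

lemma l_one [simp]: "a \<in> carrier Q \<Longrightarrow> \<one> \<otimes> a = a"
  using is_loop by (simp add: loop_def)

lemma r_one [simp]: "a \<in> carrier Q \<Longrightarrow> a \<otimes> \<one> = a"
  using is_loop by (simp add: loop_def)

lemma l_cancel:
  "\<lbrakk>a \<in> carrier Q; x \<in> carrier Q; y \<in> carrier Q; a \<otimes> x = a \<otimes> y\<rbrakk> \<Longrightarrow> x = y"
  using is_loop unfolding loop_def by (metis m_closed)

lemma r_cancel:
  "\<lbrakk>a \<in> carrier Q; x \<in> carrier Q; y \<in> carrier Q; x \<otimes> a = y \<otimes> a\<rbrakk> \<Longrightarrow> x = y"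
  using is_loop unfolding loop_def by (metis m_closed)

lemma ldiv_spec:
  assumes "a \<in> carrier Q" "b \<in> carrier Q"
  shows "ldiv Q a b \<in> carrier Q \<and> a \<otimes> ldiv Q a b = b"
  unfolding ldiv_def by (rule theI') (use is_loop assms in \<open>simp add: loop_def\<close>)

lemma rdiv_spec:
  assumes "a \<in> carrier Q" "b \<in> carrier Q"
  shows "rdiv Q b a \<in> carrier Q \<and> rdiv Q b a \<otimes> a = b"
  unfolding rdiv_def by (rule theI') (use is_loop assms in \<open>simp add: loop_def\<close>)

lemma center_closed: "z \<in> loop_center Q \<Longrightarrow> z \<in> carrier Q"
  unfolding loop_center_def by blast

lemma center_commute: "\<lbrakk>z \<in> loop_center Q; x \<in> carrier Q\<rbrakk> \<Longrightarrow> z \<otimes> x = x \<otimes> z"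
  unfolding loop_center_def by blast

lemma center_assoc_left:
  "\<lbrakk>z \<in> loop_center Q; x \<in> carrier Q; y \<in> carrier Q\<rbrakk> \<Longrightarrow> (z \<otimes> x) \<otimes> y = z \<otimes> (x \<otimes> y)"
  unfolding loop_center_def by blast

lemma center_assoc_middle:
  "\<lbrakk>z \<in> loop_center Q; x \<in> carrier Q; y \<in> carrier Q\<rbrakk> \<Longrightarrow> (x \<otimes> z) \<otimes> y = x \<otimes> (z \<otimes> y)"
  unfolding loop_center_def by blast

lemma center_assoc_right:
  "\<lbrakk>z \<in> loop_center Q; x \<in> carrier Q; y \<in> carrier Q\<rbrakk> \<Longrightarrow> (x \<otimes> y) \<otimes> z = x \<otimes> (y \<otimes> z)"
  unfolding loop_center_def by blast

lemma center_left_commute: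
  "\<lbrakk>z \<in> loop_center Q; x \<in> carrier Q; y \<in> carrier Q\<rbrakk> \<Longrightarrow> z \<otimes> (x \<otimes> y) = x \<otimes> (z \<otimes> y)"
  by (metis center_assoc_left center_assoc_middle center_commute)

lemma one_in_center: "\<one> \<in> loop_center Q"
  unfolding loop_center_def by simp

lemma center_mult_closed:
  assumes z1: "z1 \<in> loop_center Q" and z2: "z2 \<in> loop_center Q"
  shows "z1 \<otimes> z2 \<in> loop_center Q"
proof -
  have c1: "z1 \<in> carrier Q" and c2: "z2 \<in> carrier Q"
    using z1 z2 by (auto intro: center_closed)
  have "z1 \<otimes> z2 \<otimes> x = x \<otimes> (z1 \<otimes> z2) \<and>
      z1 \<otimes> z2 \<otimes> x \<otimes> y = z1 \<otimes> z2 \<otimes> (x \<otimes> y) \<and>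
      x \<otimes> (z1 \<otimes> z2) \<otimes> y = x \<otimes> (z1 \<otimes> z2 \<otimes> y) \<and>
      x \<otimes> y \<otimes> (z1 \<otimes> z2) = x \<otimes> (y \<otimes> (z1 \<otimes> z2))"
    if x: "x \<in> carrier Q" and y: "y \<in> carrier Q" for x y
  proof (intro conjI)
    show "z1 \<otimes> z2 \<otimes> x = x \<otimes> (z1 \<otimes> z2)"
      by (metis c2 center_assoc_left center_assoc_middle center_commute x z1 z2)
    show "z1 \<otimes> z2 \<otimes> x \<otimes> y = z1 \<otimes> z2 \<otimes> (x \<otimes> y)"
      by (metis c2 center_assoc_left m_closed x y z1 z2)
    show "x \<otimes> (z1 \<otimes> z2) \<otimes> y = x \<otimes> (z1 \<otimes> z2 \<otimes> y)"
      by (metis c1 c2 center_assoc_middle center_assoc_right m_closed x y z1 z2)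
    show "x \<otimes> y \<otimes> (z1 \<otimes> z2) = x \<otimes> (y \<otimes> (z1 \<otimes> z2))"
      by (metis c1 center_assoc_right m_closed x y z1 z2)
  qed
  with c1 c2 show ?thesis
    unfolding loop_center_def by blast
qed

lemma center_inverse_in_center:
  assumes z: "z \<in> loop_center Q" and w: "w \<in> carrier Q" and zw: "z \<otimes> w = \<one>"
  shows "w \<in> loop_center Q"
proof -
  have c: "z \<in> carrier Q" using z by (rule center_closed)
  have z_w: "z \<otimes> (w \<otimes> u) = u" if "u \<in> carrier Q" for u
    using center_assoc_left[OF z w that] zw that by simp
  have z_w': "z \<otimes> (u \<otimes> w) = u" if "u \<in> carrier Q" for u
    using center_left_commute[OF z that w] zw that by simp
  \<comment> \<open>Each identity is checked after multiplying on the left by z, which is cancellable.\<close>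
  have "w \<otimes> x = x \<otimes> w \<and> w \<otimes> x \<otimes> y = w \<otimes> (x \<otimes> y) \<and>
      x \<otimes> w \<otimes> y = x \<otimes> (w \<otimes> y) \<and> x \<otimes> y \<otimes> w = x \<otimes> (y \<otimes> w)"
    if x: "x \<in> carrier Q" and y: "y \<in> carrier Q" for x y
  proof (intro conjI)
    show "w \<otimes> x = x \<otimes> w"
      by (rule l_cancel[OF c]) (use w x z_w z_w' in auto)
    show "w \<otimes> x \<otimes> y = w \<otimes> (x \<otimes> y)"
      by (rule l_cancel[OF c])
        (use w x y z_w in \<open>auto simp: center_assoc_left[OF z, symmetric]\<close>)
    show "x \<otimes> w \<otimes> y = x \<otimes> (w \<otimes> y)"
    proof (rule l_cancel[OF c])
      have "z \<otimes> (x \<otimes> w \<otimes> y) = (z \<otimes> (x \<otimes> w)) \<otimes> y"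
        using center_assoc_left[OF z _ y] w x by simp
      also have "\<dots> = z \<otimes> (x \<otimes> (w \<otimes> y))"
        using center_left_commute[OF z x] w x y z_w z_w' by simp
      finally show "z \<otimes> (x \<otimes> w \<otimes> y) = z \<otimes> (x \<otimes> (w \<otimes> y))" .
    qed (use w x y in auto)
    show "x \<otimes> y \<otimes> w = x \<otimes> (y \<otimes> w)"
      by (rule l_cancel[OF c])
        (use w x y z_w' in \<open>auto simp: center_left_commute[OF z]\<close>)
  qed
  with w show ?thesis
    unfolding loop_center_def by blast
qed

lemma center_inverse_ex: "z \<in> loop_center Q \<Longrightarrow> \<exists>w\<in>loop_center Q. z \<otimes> w = \<one>"
  using ldiv_spec[OF center_closed one_closed] center_inverse_in_center by blast

lemma center_mult_interchange:
  assumes "a \<in> carrier Q" "b \<in> carrier Q" "z1 \<in> loop_center Q" "z2 \<in> loop_center Q"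
  shows "(a \<otimes> z1) \<otimes> (b \<otimes> z2) = (a \<otimes> b) \<otimes> (z1 \<otimes> z2)"
proof -
  have "(a \<otimes> z1) \<otimes> (b \<otimes> z2) = a \<otimes> (z1 \<otimes> (b \<otimes> z2))"
    using assms by (simp add: center_assoc_middle center_closed)
  also have "z1 \<otimes> (b \<otimes> z2) = b \<otimes> (z1 \<otimes> z2)"
    using assms by (simp add: center_left_commute center_closed)
  also have "a \<otimes> (b \<otimes> (z1 \<otimes> z2)) = (a \<otimes> b) \<otimes> (z1 \<otimes> z2)"
    using assms by (simp add: center_assoc_right center_mult_closed)
  finally show ?thesis .
qed

lemma lcoset_self: "a \<in> carrier Q \<Longrightarrow> a \<in> lcoset Q a (loop_center Q)"
  unfolding lcoset_def using one_in_center by force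

lemma lcoset_eqD:
  "\<lbrakk>b \<in> carrier Q; lcoset Q a (loop_center Q) = lcoset Q b (loop_center Q)\<rbrakk>
    \<Longrightarrow> \<exists>z\<in>loop_center Q. b = a \<otimes> z"
  using lcoset_self[of b] unfolding lcoset_def by auto

lemma lcoset_mult_center:
  assumes a: "a \<in> carrier Q" and z: "z \<in> loop_center Q"
  shows "lcoset Q (a \<otimes> z) (loop_center Q) = lcoset Q a (loop_center Q)"
proof -
  obtain w where w: "w \<in> loop_center Q" "z \<otimes> w = \<one>"
    using center_inverse_ex[OF z] by blast
  have "a \<otimes> z \<otimes> n = a \<otimes> (z \<otimes> n)" if "n \<in> loop_center Q" for n
    using a z that by (simp add: center_assoc_middle center_closed)
  moreover have "a \<otimes> n = a \<otimes> z \<otimes> (w \<otimes> n)" if "n \<in> loop_center Q" for n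
    using a z w that
    by (simp add: center_assoc_middle center_assoc_left[symmetric] center_closed)
  ultimately show ?thesis
    unfolding lcoset_def using z w by (blast intro: center_mult_closed)
qed

lemma factor_loop_mult:
  assumes a: "a \<in> carrier Q" and b: "b \<in> carrier Q"
  shows "lcoset Q a (loop_center Q) \<otimes>\<^bsub>factor_loop Q (loop_center Q)\<^esub> lcoset Q b (loop_center Q)
    = lcoset Q (a \<otimes> b) (loop_center Q)"
proof -
  let ?Z = "loop_center Q"
  define a' where "a' = (SOME x. x \<in> lcoset Q a ?Z \<inter> carrier Q)"
  define b' where "b' = (SOME x. x \<in> lcoset Q b ?Z \<inter> carrier Q)"
  have "a' \<in> lcoset Q a ?Z"
    unfolding a'_def by (rule someI2[of _ a]) (use a lcoset_self in auto)
  then obtain z1 where z1: "z1 \<in> ?Z" "a' = a \<otimes> z1" unfolding lcoset_def by blast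
  have "b' \<in> lcoset Q b ?Z"
    unfolding b'_def by (rule someI2[of _ b]) (use b lcoset_self in auto)
  then obtain z2 where z2: "z2 \<in> ?Z" "b' = b \<otimes> z2" unfolding lcoset_def by blast
  have "lcoset Q a ?Z \<otimes>\<^bsub>factor_loop Q ?Z\<^esub> lcoset Q b ?Z = lcoset Q (a' \<otimes> b') ?Z"
    unfolding factor_loop_def a'_def b'_def by simp
  also have "\<dots> = lcoset Q (a \<otimes> b) ?Z"
    using z1 z2 a b by (simp add: center_mult_interchange lcoset_mult_center center_mult_closed)
  finally show ?thesis .
qed

lemma subloop_gen_subset: "S \<subseteq> carrier Q \<Longrightarrow> subloop_gen Q S \<subseteq> carrier Q"
proof
  show "h \<in> carrier Q" if "S \<subseteq> carrier Q" "h \<in> subloop_gen Q S" for h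
    using that(2) by induction (use that(1) ldiv_spec rdiv_spec in auto)
qed

lemma monogenic_closed: "\<lbrakk>g \<in> carrier Q; h \<in> subloop_gen Q {g}\<rbrakk> \<Longrightarrow> h \<in> carrier Q"
  using subloop_gen_subset[of "{g}"] by blast

lemma generate_factor_loop_cosets:
  assumes grp: "group (factor_loop Q (loop_center Q))" and g: "g \<in> carrier Q"
    and A: "A \<in> generate (factor_loop Q (loop_center Q)) {lcoset Q g (loop_center Q)}"
  shows "\<exists>h\<in>subloop_gen Q {g}. A = lcoset Q h (loop_center Q)"
  using A
proof induction
  case one
  then show ?case by (auto simp: factor_loop_one intro: subloop_gen.one)
next
  case (incl h)
  then show ?case by (blast intro: subloop_gen.incl)
next
  case (inv h)
  let ?F = "factor_loop Q (loop_center Q)"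
  define w where "w = rdiv Q \<one> g"
  have w: "w \<in> carrier Q" "w \<otimes> g = \<one>"
    using rdiv_spec[OF g one_closed] unfolding w_def by auto
  have "lcoset Q w (loop_center Q) \<otimes>\<^bsub>?F\<^esub> lcoset Q g (loop_center Q) = \<one>\<^bsub>?F\<^esub>"
    using w g by (simp add: factor_loop_mult factor_loop_one)
  moreover have "lcoset Q g (loop_center Q) \<in> carrier ?F" "lcoset Q w (loop_center Q) \<in> carrier ?F"
    using g w(1) by (auto simp: factor_loop_carrier)
  ultimately have "inv\<^bsub>?F\<^esub> h = lcoset Q w (loop_center Q)"
    using inv by (simp add: group.inv_equality[OF grp])
  moreover have "w \<in> subloop_gen Q {g}"
    unfolding w_def by (blast intro: subloop_gen.intros)
  ultimately show ?case by blast
next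
  case (eng h1 h2)
  then obtain a b where ab: "a \<in> subloop_gen Q {g}" "b \<in> subloop_gen Q {g}"
    and "h1 = lcoset Q a (loop_center Q)" "h2 = lcoset Q b (loop_center Q)"
    by blast
  then have "h1 \<otimes>\<^bsub>factor_loop Q (loop_center Q)\<^esub> h2 = lcoset Q (a \<otimes> b) (loop_center Q)"
    using g by (simp add: factor_loop_mult monogenic_closed)
  with ab show ?case by (blast intro: subloop_gen.mult)
qed

lemma cyclic_factor_loop_decomposition:
  assumes "cyclic_group (factor_loop Q (loop_center Q))"
  obtains g where "g \<in> carrier Q"
    and "\<And>x. x \<in> carrier Q \<Longrightarrow> \<exists>h\<in>subloop_gen Q {g}. \<exists>z\<in>loop_center Q. x = h \<otimes> z"
proof -
  let ?F = "factor_loop Q (loop_center Q)"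
  obtain g where g: "g \<in> carrier Q" and gen: "carrier ?F = generate ?F {lcoset Q g (loop_center Q)}"
    using assms unfolding cyclic_group_def by (auto simp: factor_loop_carrier)
  have "\<exists>h\<in>subloop_gen Q {g}. \<exists>z\<in>loop_center Q. x = h \<otimes> z" if x: "x \<in> carrier Q" for x
  proof -
    have "lcoset Q x (loop_center Q) \<in> generate ?F {lcoset Q g (loop_center Q)}"
      using x gen by (auto simp: factor_loop_carrier)
    then obtain h where "h \<in> subloop_gen Q {g}" "lcoset Q x (loop_center Q) = lcoset Q h (loop_center Q)"
      using generate_factor_loop_cosets assms g unfolding cyclic_group_def by blast
    then show ?thesis
      using x lcoset_eqD by metis
  qed
  with g show ?thesis by (rule that)
qed

end

locale power_assoc_loop = loop_struct +
  assumes power_assoc: "power_associative Q"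
begin

lemma monogenic_assoc:
  "\<lbrakk>g \<in> carrier Q; a \<in> subloop_gen Q {g}; b \<in> subloop_gen Q {g}; c \<in> subloop_gen Q {g}\<rbrakk>
    \<Longrightarrow> (a \<otimes> b) \<otimes> c = a \<otimes> (b \<otimes> c)"
  using power_assoc unfolding power_associative_def by blast

text \<open>In the associative subloop \<langle>g\<rangle>, the elements commuting with a fixed c contain g and
  are closed under products and both divisions.\<close>
lemma monogenic_commute_with:
  assumes g: "g \<in> carrier Q" and c: "c \<in> subloop_gen Q {g}" and cg: "g \<otimes> c = c \<otimes> g"
    and h: "h \<in> subloop_gen Q {g}"
  shows "h \<otimes> c = c \<otimes> h"
  using h
proof induction
  case one
  then show ?case using monogenic_closed[OF g c] by simp
next
  case (incl s)
  then show ?case using cg by simp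
next
  case (mult a b)
  note A = monogenic_assoc[OF g]
  have "a \<otimes> b \<otimes> c = a \<otimes> (b \<otimes> c)" by (rule A[OF mult.hyps c])
  also have "\<dots> = a \<otimes> (c \<otimes> b)" by (simp only: mult.IH(2))
  also have "\<dots> = (a \<otimes> c) \<otimes> b" by (rule A[OF mult.hyps(1) c mult.hyps(2), symmetric])
  also have "\<dots> = (c \<otimes> a) \<otimes> b" by (simp only: mult.IH(1))
  also have "\<dots> = c \<otimes> (a \<otimes> b)" by (rule A[OF c mult.hyps])
  finally show ?case .
next
  case (ldiv a b)
  note A = monogenic_assoc[OF g]
  define x where "x = ldiv Q a b"
  have a: "a \<in> carrier Q" and b: "b \<in> carrier Q"
    using ldiv.hyps by (auto intro: monogenic_closed[OF g])
  have xH: "x \<in> subloop_gen Q {g}"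
    unfolding x_def by (rule subloop_gen.ldiv[OF ldiv.hyps])
  have x: "x \<in> carrier Q" and ax: "a \<otimes> x = b"
    using ldiv_spec[OF a b] unfolding x_def by auto
  have "a \<otimes> (x \<otimes> c) = (a \<otimes> x) \<otimes> c" by (rule A[OF ldiv.hyps(1) xH c, symmetric])
  also have "\<dots> = c \<otimes> (a \<otimes> x)" by (simp only: ax ldiv.IH(2))
  also have "\<dots> = (c \<otimes> a) \<otimes> x" by (rule A[OF c ldiv.hyps(1) xH, symmetric])
  also have "\<dots> = (a \<otimes> c) \<otimes> x" by (simp only: ldiv.IH(1))
  also have "\<dots> = a \<otimes> (c \<otimes> x)" by (rule A[OF ldiv.hyps(1) c xH])
  finally have "x \<otimes> c = c \<otimes> x"
    using l_cancel a x monogenic_closed[OF g c] by blast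
  then show ?case unfolding x_def .
next
  case (rdiv a b)
  note A = monogenic_assoc[OF g]
  define y where "y = rdiv Q b a"
  have a: "a \<in> carrier Q" and b: "b \<in> carrier Q"
    using rdiv.hyps by (auto intro: monogenic_closed[OF g])
  have yH: "y \<in> subloop_gen Q {g}"
    unfolding y_def by (rule subloop_gen.rdiv[OF rdiv.hyps])
  have y: "y \<in> carrier Q" and ya: "y \<otimes> a = b"
    using rdiv_spec[OF a b] unfolding y_def by auto
  have "(y \<otimes> c) \<otimes> a = y \<otimes> (a \<otimes> c)" by (simp only: A[OF yH c rdiv.hyps(1)] rdiv.IH(1))
  also have "\<dots> = (y \<otimes> a) \<otimes> c" by (rule A[OF yH rdiv.hyps(1) c, symmetric])
  also have "\<dots> = c \<otimes> (y \<otimes> a)" by (simp only: ya rdiv.IH(2))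
  also have "\<dots> = (c \<otimes> y) \<otimes> a" by (rule A[OF c yH rdiv.hyps(1), symmetric])
  finally have "y \<otimes> c = c \<otimes> y"
    using r_cancel a y monogenic_closed[OF g c] by blast
  then show ?case unfolding y_def .
qed

lemma monogenic_commute:
  assumes g: "g \<in> carrier Q" and a: "a \<in> subloop_gen Q {g}" and b: "b \<in> subloop_gen Q {g}"
  shows "a \<otimes> b = b \<otimes> a"
proof -
  have gH: "g \<in> subloop_gen Q {g}" by (simp add: subloop_gen.incl)
  have "g \<otimes> b = b \<otimes> g"
    using monogenic_commute_with[OF g gH refl b] by (rule sym)
  then show ?thesis by (rule monogenic_commute_with[OF g b _ a])
qed

lemma comm_group_if_monogenic_times_center:
  assumes g: "g \<in> carrier Q"
    and decomp: "\<And>x. x \<in> carrier Q \<Longrightarrow> \<exists>h\<in>subloop_gen Q {g}. \<exists>z\<in>loop_center Q. x = h \<otimes> z"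
  shows "comm_group Q"
proof (rule comm_groupI)
  note H = monogenic_closed[OF g] and Z = center_closed
  show "x \<otimes> y \<otimes> w = x \<otimes> (y \<otimes> w)"
    if xyw: "x \<in> carrier Q" "y \<in> carrier Q" "w \<in> carrier Q" for x y w
  proof -
    obtain h1 z1 h2 z2 h3 z3 where
      h: "h1 \<in> subloop_gen Q {g}" "h2 \<in> subloop_gen Q {g}" "h3 \<in> subloop_gen Q {g}"
      and z: "z1 \<in> loop_center Q" "z2 \<in> loop_center Q" "z3 \<in> loop_center Q"
      and xyw_eq: "x = h1 \<otimes> z1" "y = h2 \<otimes> z2" "w = h3 \<otimes> z3"
      using decomp[OF xyw(1)] decomp[OF xyw(2)] decomp[OF xyw(3)] by blast
    have "x \<otimes> y \<otimes> w = ((h1 \<otimes> h2) \<otimes> h3) \<otimes> ((z1 \<otimes> z2) \<otimes> z3)"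
      using h z by (simp add: xyw_eq H center_mult_interchange center_mult_closed)
    also have "\<dots> = (h1 \<otimes> (h2 \<otimes> h3)) \<otimes> (z1 \<otimes> (z2 \<otimes> z3))"
      using h z by (simp add: monogenic_assoc[OF g] center_assoc_left Z)
    also have "\<dots> = (h1 \<otimes> z1) \<otimes> ((h2 \<otimes> h3) \<otimes> (z2 \<otimes> z3))"
      by (rule center_mult_interchange[symmetric])
        (use h z in \<open>auto simp: H subloop_gen.mult center_mult_closed\<close>)
    also have "\<dots> = x \<otimes> (y \<otimes> w)"
      using h z by (simp add: xyw_eq H center_mult_interchange)
    finally show ?thesis .
  qed
  show "x \<otimes> y = y \<otimes> x" if xy: "x \<in> carrier Q" "y \<in> carrier Q" for x y
  proof -
    obtain h1 z1 h2 z2 where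
      h: "h1 \<in> subloop_gen Q {g}" "h2 \<in> subloop_gen Q {g}"
      and z: "z1 \<in> loop_center Q" "z2 \<in> loop_center Q"
      and "x = h1 \<otimes> z1" "y = h2 \<otimes> z2"
      using decomp[OF xy(1)] decomp[OF xy(2)] by blast
    then have "x \<otimes> y = (h1 \<otimes> h2) \<otimes> (z1 \<otimes> z2)" and "y \<otimes> x = (h2 \<otimes> h1) \<otimes> (z2 \<otimes> z1)"
      by (simp_all add: H center_mult_interchange)
    then show ?thesis
      using h z by (simp add: monogenic_commute[OF g] center_commute Z)
  qed
  show "\<exists>y\<in>carrier Q. y \<otimes> x = \<one>" if "x \<in> carrier Q" for x
    using rdiv_spec[OF that one_closed] by blast
qed auto

end

theorem proposition4p1:
  fixes Q :: "'a monoid"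
  assumes "loop Q"
    and "power_associative Q"
    and "cyclic_group (factor_loop Q (loop_center Q))"
  shows "comm_group Q"
proof -
  interpret power_assoc_loop Q
    using assms(1,2) by unfold_locales
  obtain g where "g \<in> carrier Q"
    and "\<And>x. x \<in> carrier Q \<Longrightarrow> \<exists>h\<in>subloop_gen Q {g}. \<exists>z\<in>loop_center Q. x = h \<otimes>\<^bsub>Q\<^esub> z"
    using cyclic_factor_loop_decomposition[OF assms(3)] by blast
  then show ?thesis
    by (rule comm_group_if_monogenic_times_center)
qed

end
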